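(* An undirected graph $G=(V,E)$ (finite or infinite) has at most one multiplex $M$ with $\widetilde M=V$.
   Context: A graph $G=(V,E)$ has vertex set $V$ and edge set $E\subseteq V^2$; it is undirected if $E$ is irreflexive and symmetric. Implication classes: on $E$ define $(a,b)\Gamma(a',b')$ iff either $a=a'$ and $(b,b')\notin E$, or $b=b'$ and $(a,a')\notin E$; the classes of the transitive closure $\Gamma^*$ are the implication classes. For an implication class $A$, $A^{-1}=\{(b,a):(a,b)\in A\}$ and the color class is $\widehat A=A\cup A^{-1}$. A simplex of rank $r\ge1$ is a complete sub-graph $S=(V_S,E_S)$ of $G$ on $r+1$ vertices whose distinct undirected edges lie in distinct color classes. A multiplex is a set of edges of the form $M(S)=\bigcup\{\widehat A:\widehat A\text{ a color class},\ \widehat A\cap E_S\neq\emptyset\}$ for a simplex $S$; $\widetilde M$ is the set of vertices spanned by $M$. *)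

theory Defs
  imports Main
begin

definition undirected_graph :: "'a set \<Rightarrow> ('a \<times> 'a) set \<Rightarrow> bool" where
  "undirected_graph V E \<longleftrightarrow> E \<subseteq> V \<times> V \<and> irrefl E \<and> sym E"

definition Gamma :: "('a \<times> 'a) set \<Rightarrow> (('a \<times> 'a) \<times> ('a \<times> 'a)) set" where
  "Gamma E = {((a,b),(a',b')). (a,b) \<in> E \<and> (a',b') \<in> E \<and>
       ((a = a' \<and> (b,b') \<notin> E) \<or> (b = b' \<and> (a,a') \<notin> E))}"

definition impl_class :: "('a \<times> 'a) set \<Rightarrow> 'a \<times> 'a \<Rightarrow> ('a \<times> 'a) set" where
  "impl_class E e = {f. (e, f) \<in> (Gamma E)\<^sup>+}"

definition implication_classes :: "('a \<times> 'a) set \<Rightarrow> ('a \<times> 'a) set set" where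
  "implication_classes E = impl_class E ` E"

definition color_of :: "('a \<times> 'a) set \<Rightarrow> ('a \<times> 'a) set" where
  "color_of A = A \<union> A\<inverse>"

definition color_classes :: "('a \<times> 'a) set \<Rightarrow> ('a \<times> 'a) set set" where
  "color_classes E = color_of ` implication_classes E"

definition sub_edges :: "('a \<times> 'a) set \<Rightarrow> 'a set \<Rightarrow> ('a \<times> 'a) set" where
  "sub_edges E VS = E \<inter> (VS \<times> VS)"

(* VS spans a simplex of rank r = card VS - 1 \<ge> 1: a complete subgraph on
   finitely many (\<ge> 2) vertices whose distinct undirected edges lie in distinct colour classes *)
definition simplex :: "'a set \<Rightarrow> ('a \<times> 'a) set \<Rightarrow> 'a set \<Rightarrow> bool" where
  "simplex V E VS \<longleftrightarrow> VS \<subseteq> V \<and> finite VS \<and> card VS \<ge> 2 \<and>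
     (\<forall>a\<in>VS. \<forall>b\<in>VS. a \<noteq> b \<longrightarrow> (a,b) \<in> E) \<and>
     (\<forall>a b c d. (a,b) \<in> sub_edges E VS \<longrightarrow> (c,d) \<in> sub_edges E VS \<longrightarrow> {a,b} \<noteq> {c,d} \<longrightarrow>
        (\<forall>C\<in>color_classes E. \<not> ((a,b) \<in> C \<and> (c,d) \<in> C)))"

definition multiplex_of :: "('a \<times> 'a) set \<Rightarrow> 'a set \<Rightarrow> ('a \<times> 'a) set" where
  "multiplex_of E VS = \<Union>{C \<in> color_classes E. C \<inter> sub_edges E VS \<noteq> {}}"

definition is_multiplex :: "'a set \<Rightarrow> ('a \<times> 'a) set \<Rightarrow> ('a \<times> 'a) set \<Rightarrow> bool" where
  "is_multiplex V E M \<longleftrightarrow> (\<exists>VS. simplex V E VS \<and> M = multiplex_of E VS)"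

(* \<tilde>M, the set of vertices spanned by the edge set M *)
definition spanned :: "('a \<times> 'a) set \<Rightarrow> 'a set" where
  "spanned M = fst ` M \<union> snd ` M"

end

theory Submission
  imports Defs
begin

text \<open>Call two vertices co-connected if a path in the complement of the graph joins them.
  A \<open>Gamma\<close>-step moves one end of an edge along a non-edge, so forcing preserves the
  co-components of both ends; conversely, an edge between different co-components can slide
  its ends along co-paths. Hence, if the complement is disconnected, a spanning multiplex is
  exactly the set of edges joining different co-components.
  If the complement is connected, the triangle lemma shows that the vertices spanned by the
  colour class of a simplex edge form a union of co-components, hence all of \<open>V\<close>, which leaves
  no room for a third simplex vertex. So a spanning multiplex is a single colour class, and by
  the triangle lemma again at most one colour class spans \<open>V\<close>.\<close>

locale ugraph =
  fixes V :: "'a set" and E :: "('a \<times> 'a) set"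
  assumes undirected: "undirected_graph V E"
begin

lemma edge_vertices: "(a,b) \<in> E \<Longrightarrow> a \<in> V \<and> b \<in> V"
  using undirected unfolding undirected_graph_def by blast

lemma edge_irrefl: "(a,a) \<notin> E"
  using undirected unfolding undirected_graph_def by (simp add: irreflD)

lemma edge_sym: "(a,b) \<in> E \<Longrightarrow> (b,a) \<in> E"
  using undirected unfolding undirected_graph_def by (simp add: symD)

lemma Gamma_edges: "(e,f) \<in> Gamma E \<Longrightarrow> e \<in> E \<and> f \<in> E"
  unfolding Gamma_def by auto

lemma Gamma_refl: "e \<in> E \<Longrightarrow> (e,e) \<in> Gamma E"
  unfolding Gamma_def using edge_irrefl by auto

lemma Gamma_sym: "(e,f) \<in> Gamma E \<Longrightarrow> (f,e) \<in> Gamma E"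
  unfolding Gamma_def using edge_sym by blast

lemma Gamma_swap: "(e,f) \<in> Gamma E \<Longrightarrow> (prod.swap e, prod.swap f) \<in> Gamma E"
  unfolding Gamma_def using edge_sym by auto

lemma Gamma_trancl_edges: "(e,f) \<in> (Gamma E)\<^sup>+ \<Longrightarrow> e \<in> E \<and> f \<in> E"
  by (induction rule: trancl_induct) (auto dest: Gamma_edges)

lemma Gamma_trancl_refl: "e \<in> E \<Longrightarrow> (e,e) \<in> (Gamma E)\<^sup>+"
  by (simp add: Gamma_refl r_into_trancl')

lemma Gamma_trancl_sym: "(e,f) \<in> (Gamma E)\<^sup>+ \<Longrightarrow> (f,e) \<in> (Gamma E)\<^sup>+"
proof -
  have "sym (Gamma E)" using Gamma_sym by (auto intro: symI)
  then show "(e,f) \<in> (Gamma E)\<^sup>+ \<Longrightarrow> (f,e) \<in> (Gamma E)\<^sup>+" by (simp add: sym_trancl symD)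
qed

lemma Gamma_trancl_swap:
  "(e,f) \<in> (Gamma E)\<^sup>+ \<Longrightarrow> (prod.swap e, prod.swap f) \<in> (Gamma E)\<^sup>+"
  by (induction rule: trancl_induct) (auto intro: Gamma_swap trancl_into_trancl)

lemma Gamma_trancl_swap_pairs: "((a,b),(c,d)) \<in> (Gamma E)\<^sup>+ \<Longrightarrow> ((b,a),(d,c)) \<in> (Gamma E)\<^sup>+"
  using Gamma_trancl_swap by fastforce

definition same_color :: "'a \<times> 'a \<Rightarrow> 'a \<times> 'a \<Rightarrow> bool" where
  "same_color e f \<longleftrightarrow> (e,f) \<in> (Gamma E)\<^sup>+ \<or> (e, prod.swap f) \<in> (Gamma E)\<^sup>+"

lemma color_classes_eq: "color_classes E = (\<lambda>e. Collect (same_color e)) ` E"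
proof -
  have "color_of (impl_class E e) = Collect (same_color e)" for e
    unfolding color_of_def impl_class_def same_color_def by (auto simp: prod.swap_def)
  then show ?thesis
    unfolding color_classes_def implication_classes_def by (simp add: image_image)
qed

lemma Gamma_trancl_same_color: "(e,f) \<in> (Gamma E)\<^sup>+ \<Longrightarrow> same_color e f"
  unfolding same_color_def by blast

lemma Gamma_same_color: "(e,f) \<in> Gamma E \<Longrightarrow> same_color e f"
  by (simp add: Gamma_trancl_same_color r_into_trancl')

lemma same_color_edges: "same_color e f \<Longrightarrow> e \<in> E \<and> f \<in> E"
  unfolding same_color_def using Gamma_trancl_edges by (metis prod.collapse swap_simp edge_sym)

lemma same_color_refl: "e \<in> E \<Longrightarrow> same_color e e"
  unfolding same_color_def using Gamma_trancl_refl by blast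

lemma same_color_swap_right: "same_color e (a,b) \<longleftrightarrow> same_color e (b,a)"
  unfolding same_color_def by auto

lemma same_color_sym: "same_color e f \<Longrightarrow> same_color f e"
  unfolding same_color_def using Gamma_trancl_sym Gamma_trancl_swap by (metis swap_swap)

lemma same_color_trans: "same_color e f \<Longrightarrow> same_color f g \<Longrightarrow> same_color e g"
  unfolding same_color_def using trancl_trans Gamma_trancl_swap by (metis swap_swap)

lemma same_color_swap_left: "same_color (a,b) f \<longleftrightarrow> same_color (b,a) f"
  by (metis same_color_edges same_color_refl same_color_swap_right same_color_trans)

lemma in_spanned_color_class_iff: "z \<in> spanned (Collect (same_color e)) \<longleftrightarrow> (\<exists>w. same_color e (z,w))"
proof -
  have "z \<in> snd ` Collect (same_color e) \<longleftrightarrow> (\<exists>w. same_color e (w,z))"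
    by (auto simp: image_iff)
  moreover have "z \<in> fst ` Collect (same_color e) \<longleftrightarrow> (\<exists>w. same_color e (z,w))"
    by (auto simp: image_iff)
  ultimately show ?thesis
    unfolding spanned_def using same_color_swap_right by blast
qed

lemma mem_multiplex_of_iff:
  "f \<in> multiplex_of E VS \<longleftrightarrow> (\<exists>s\<in>VS. \<exists>t\<in>VS. (s,t) \<in> E \<and> same_color (s,t) f)"
proof
  assume "f \<in> multiplex_of E VS"
  then obtain e s t where "same_color e f" "same_color e (s,t)" "s \<in> VS" "t \<in> VS"
    unfolding multiplex_of_def color_classes_eq sub_edges_def by auto
  then show "\<exists>s\<in>VS. \<exists>t\<in>VS. (s,t) \<in> E \<and> same_color (s,t) f"
    using same_color_edges same_color_sym same_color_trans by blast
next
  assume "\<exists>s\<in>VS. \<exists>t\<in>VS. (s,t) \<in> E \<and> same_color (s,t) f"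
  then obtain s t where "s \<in> VS" "t \<in> VS" "(s,t) \<in> E" "same_color (s,t) f" by blast
  then show "f \<in> multiplex_of E VS"
    unfolding multiplex_of_def color_classes_eq sub_edges_def using same_color_refl by blast
qed

lemma multiplex_of_edge: "(s,t) \<in> E \<Longrightarrow> multiplex_of E {s,t} = Collect (same_color (s,t))"
  unfolding mem_multiplex_of_iff set_eq_iff using edge_irrefl same_color_swap_left by auto

lemma in_spanned_multiplex_of:
  assumes "v \<in> spanned (multiplex_of E VS)"
  shows "\<exists>s\<in>VS. \<exists>t\<in>VS. \<exists>w. same_color (s,t) (v,w)"
proof -
  obtain x y where "(x,y) \<in> multiplex_of E VS" "v = x \<or> v = y"
    using assms unfolding spanned_def by auto
  then show ?thesis
    using mem_multiplex_of_iff same_color_swap_right by metis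
qed

lemma simplex_edge: "simplex V E VS \<Longrightarrow> s \<in> VS \<Longrightarrow> t \<in> VS \<Longrightarrow> s \<noteq> t \<Longrightarrow> (s,t) \<in> E"
  unfolding simplex_def by blast

lemma simplex_colors_distinct:
  assumes "simplex V E VS" "s \<in> VS" "t \<in> VS" "u \<in> VS" "w \<in> VS" "{s,t} \<noteq> {u,w}"
  shows "\<not> same_color (s,t) (u,w)"
proof
  assume same: "same_color (s,t) (u,w)"
  then have "(s,t) \<in> sub_edges E VS" "(u,w) \<in> sub_edges E VS"
    using assms same_color_edges unfolding sub_edges_def by auto
  moreover have "Collect (same_color (s,t)) \<in> color_classes E"
    using same same_color_edges color_classes_eq by blast
  moreover have "(s,t) \<in> Collect (same_color (s,t))" "(u,w) \<in> Collect (same_color (s,t))"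
    using same same_color_refl same_color_edges by auto
  ultimately show False
    using assms(1,6) unfolding simplex_def by meson
qed

lemma Gamma_trancl_triangle_step:
  assumes ab_color: "\<not> same_color (b,c) (a,b)"
    and bc_xy: "((b,c),(x,y)) \<in> (Gamma E)\<^sup>+"
    and ab_ax: "((a,b),(a,x)) \<in> (Gamma E)\<^sup>+" and ac_ay: "((a,c),(a,y)) \<in> (Gamma E)\<^sup>+"
    and step: "((x,y),(x,y')) \<in> Gamma E"
  shows "((a,c),(a,y')) \<in> (Gamma E)\<^sup>+"
proof -
  have xy': "(x,y') \<in> E" and yy': "(y,y') \<notin> E"
    using step edge_irrefl unfolding Gamma_def by auto
  have ay': "(a,y') \<in> E"
  proof (rule ccontr)
    assume "(a,y') \<notin> E"
    then have "((a,x),(y',x)) \<in> Gamma E"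
      using Gamma_trancl_edges[OF ab_ax] edge_sym[OF xy'] unfolding Gamma_def by auto
    with ab_ax have "((a,b),(y',x)) \<in> (Gamma E)\<^sup>+"
      by (rule trancl_into_trancl)
    moreover have "((y',x),(c,b)) \<in> (Gamma E)\<^sup>+"
      using Gamma_trancl_sym[OF Gamma_trancl_swap_pairs[OF trancl_into_trancl[OF bc_xy step]]] .
    ultimately have "((a,b),(c,b)) \<in> (Gamma E)\<^sup>+"
      by (rule trancl_trans)
    then have "((b,c),(b,a)) \<in> (Gamma E)\<^sup>+"
      using Gamma_trancl_swap_pairs Gamma_trancl_sym by blast
    then show False
      using ab_color unfolding same_color_def by simp
  qed
  have "((a,y),(a,y')) \<in> Gamma E"
    using Gamma_trancl_edges[OF ac_ay] ay' yy' unfolding Gamma_def by auto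
  with ac_ay show ?thesis
    by (rule trancl_into_trancl)
qed

lemma Gamma_trancl_triangle:
  assumes ab: "(a,b) \<in> E" and bc: "(b,c) \<in> E" and ac: "(a,c) \<in> E"
    and ab_color: "\<not> same_color (b,c) (a,b)" and ac_color: "\<not> same_color (b,c) (a,c)"
    and "((b,c),(x,y)) \<in> (Gamma E)\<^sup>+"
  shows "((a,b),(a,x)) \<in> (Gamma E)\<^sup>+ \<and> ((a,c),(a,y)) \<in> (Gamma E)\<^sup>+"
proof -
  have invariant_step:
    "((a,b),(a,x')) \<in> (Gamma E)\<^sup>+ \<and> ((a,c),(a,y')) \<in> (Gamma E)\<^sup>+"
    if bc_xy: "((b,c),(x,y)) \<in> (Gamma E)\<^sup>+"
      and ab_ax: "((a,b),(a,x)) \<in> (Gamma E)\<^sup>+" and ac_ay: "((a,c),(a,y)) \<in> (Gamma E)\<^sup>+"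
      and step: "((x,y),(x',y')) \<in> Gamma E" for x y x' y'
  proof -
    from step consider "x' = x" | "y' = y"
      unfolding Gamma_def by blast
    then show ?thesis
    proof cases
      case 1
      then show ?thesis
        using Gamma_trancl_triangle_step[OF ab_color bc_xy ab_ax ac_ay] step ab_ax by simp
    next
      case 2
      have "\<not> same_color (c,b) (a,c)"
        using ac_color same_color_swap_left by blast
      moreover have "((y,x),(y,x')) \<in> Gamma E"
        using Gamma_swap[OF step] 2 by simp
      ultimately show ?thesis
        using Gamma_trancl_triangle_step[OF _ Gamma_trancl_swap_pairs[OF bc_xy] ac_ay ab_ax] 2 ac_ay
        by simp
    qed
  qed
  have start: "((b,c),(b,c)) \<in> (Gamma E)\<^sup>+" "((a,b),(a,b)) \<in> (Gamma E)\<^sup>+"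
    "((a,c),(a,c)) \<in> (Gamma E)\<^sup>+"
    using Gamma_trancl_refl ab bc ac by auto
  from \<open>((b,c),(x,y)) \<in> (Gamma E)\<^sup>+\<close> show ?thesis
  proof (induction rule: trancl_induct2)
    case (base x y)
    then show ?case using invariant_step[OF start] by blast
  next
    case (step x y x' y')
    then show ?case using invariant_step by blast
  qed
qed

lemma same_color_triangle:
  assumes "(a,b) \<in> E" "(b,c) \<in> E" "(a,c) \<in> E"
    "\<not> same_color (b,c) (a,b)" "\<not> same_color (b,c) (a,c)" "same_color (b,c) (x,y)"
  shows "(a,x) \<in> E \<and> (a,y) \<in> E"
proof -
  have "(a,x') \<in> E \<and> (a,y') \<in> E" if "((b,c),(x',y')) \<in> (Gamma E)\<^sup>+" for x' y'
    using Gamma_trancl_triangle[OF assms(1-5) that] Gamma_trancl_edges by blast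
  then show ?thesis
    using assms(6) unfolding same_color_def by auto
qed

lemma triangle_apex_not_spanned:
  assumes "(a,b) \<in> E" "(b,c) \<in> E" "(a,c) \<in> E"
    "\<not> same_color (b,c) (a,b)" "\<not> same_color (b,c) (a,c)"
  shows "a \<notin> spanned (Collect (same_color (b,c)))"
  using same_color_triangle[OF assms] edge_irrefl in_spanned_color_class_iff by blast

lemma adjacent_to_color_class:
  assumes pq: "(p,q) \<in> E" and v: "v \<notin> spanned (Collect (same_color (p,q)))"
    and vp: "(v,p) \<in> E" and "same_color (p,q) (x,y)"
  shows "(v,x) \<in> E \<and> (v,y) \<in> E"
proof -
  have v_colors: "\<not> same_color (p,q) (v,u)" for u
    using v in_spanned_color_class_iff by blast
  have "(v,q) \<in> E"
  proof (rule ccontr)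
    assume "(v,q) \<notin> E"
    then have "((q,p),(v,p)) \<in> Gamma E"
      using pq vp edge_sym unfolding Gamma_def by auto
    then show False
      using Gamma_same_color same_color_swap_left v_colors by blast
  qed
  then show ?thesis
    using same_color_triangle[OF vp pq _ v_colors v_colors] assms(4) by blast
qed

lemma simplex_vertex_adjacent_to_color_class:
  assumes S: "simplex V E VS" and "s \<in> VS" "t \<in> VS" "p \<in> VS" "p \<noteq> s" "p \<noteq> t"
    and "same_color (s,t) (x,y)"
  shows "(p,x) \<in> E \<and> (p,y) \<in> E"
proof -
  have "s \<noteq> t"
    using assms(7) same_color_edges edge_irrefl by blast
  then show ?thesis
    using same_color_triangle[of p s t] simplex_edge[OF S] simplex_colors_distinct[OF S] assms
    by (metis doubleton_eq_iff)
qed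

definition co_edges :: "('a \<times> 'a) set" where
  "co_edges = {(u,v). u \<in> V \<and> v \<in> V \<and> u \<noteq> v \<and> (u,v) \<notin> E}"

abbreviation co_connected :: "'a \<Rightarrow> 'a \<Rightarrow> bool" where
  "co_connected u v \<equiv> (u,v) \<in> co_edges\<^sup>*"

lemma co_connected_sym: "co_connected u v \<Longrightarrow> co_connected v u"
proof -
  have "sym co_edges"
    unfolding co_edges_def using edge_sym by (auto intro: symI)
  then show "co_connected u v \<Longrightarrow> co_connected v u"
    by (simp add: sym_rtrancl symD)
qed

lemma non_edge_co_connected: "u \<in> V \<Longrightarrow> v \<in> V \<Longrightarrow> (u,v) \<notin> E \<Longrightarrow> co_connected u v"
  by (cases "u = v") (auto simp: co_edges_def)

lemma Gamma_co_connected: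
  assumes "((a,b),(c,d)) \<in> Gamma E"
  shows "co_connected a c \<and> co_connected b d"
proof -
  have "a \<in> V" "b \<in> V" "c \<in> V" "d \<in> V"
    using Gamma_edges[OF assms] edge_vertices by auto
  moreover from assms consider "a = c" "(b,d) \<notin> E" | "b = d" "(a,c) \<notin> E"
    unfolding Gamma_def by blast
  ultimately show ?thesis
    by cases (auto intro: non_edge_co_connected)
qed

lemma Gamma_trancl_co_connected:
  "((a,b),(c,d)) \<in> (Gamma E)\<^sup>+ \<Longrightarrow> co_connected a c \<and> co_connected b d"
proof (induction rule: trancl_induct2)
  case (base c d)
  then show ?case by (rule Gamma_co_connected)
next
  case (step c d c' d')
  with Gamma_co_connected[OF step.hyps(2)] show ?case
    by (meson rtrancl_trans)
qed

lemma same_color_co_connected: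
  "same_color (s,t) (x,y) \<Longrightarrow>
     (co_connected s x \<and> co_connected t y) \<or> (co_connected s y \<and> co_connected t x)"
  using Gamma_trancl_co_connected unfolding same_color_def by auto

lemma Gamma_trancl_slide_fst:
  assumes "co_connected u u'" and uw: "(u,w) \<in> E" and not_co: "\<not> co_connected u w"
  shows "((u,w),(u',w)) \<in> (Gamma E)\<^sup>+"
  using assms(1)
proof (induction rule: rtrancl_induct)
  case base
  then show ?case using Gamma_trancl_refl uw by blast
next
  case (step y z)
  have uz: "co_connected u z"
    using step.hyps by (rule rtrancl_into_rtrancl)
  have yz: "(y,z) \<notin> E" and zV: "z \<in> V"
    using step.hyps(2) unfolding co_edges_def by auto
  have "(z,w) \<in> E"
  proof (rule ccontr)
    assume "(z,w) \<notin> E"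
    then have "co_connected z w"
      using non_edge_co_connected[OF zV] edge_vertices[OF uw] by blast
    with uz have "co_connected u w"
      by (rule rtrancl_trans)
    with not_co show False ..
  qed
  then have "((y,w),(z,w)) \<in> Gamma E"
    using Gamma_trancl_edges[OF step.IH] yz unfolding Gamma_def by auto
  with step.IH show ?case
    by (rule trancl_into_trancl)
qed

lemma Gamma_trancl_slide_snd:
  assumes "co_connected w w'" and "(u,w) \<in> E" and "\<not> co_connected u w"
  shows "((u,w),(u,w')) \<in> (Gamma E)\<^sup>+"
  using Gamma_trancl_slide_fst[OF assms(1) edge_sym[OF assms(2)]] assms(3)
    co_connected_sym Gamma_trancl_swap_pairs
  by blast

lemma spanning_multiplex_meets_co_components:
  assumes "spanned (multiplex_of E VS) = V" "x \<in> V"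
  shows "\<exists>s\<in>VS. co_connected x s"
proof -
  obtain s t w where "s \<in> VS" "t \<in> VS" "same_color (s,t) (x,w)"
    using in_spanned_multiplex_of assms by blast
  then show ?thesis
    using same_color_co_connected co_connected_sym by blast
qed

lemma simplex_vertices_co_disconnected:
  assumes co_disconnected: "\<exists>u\<in>V. \<exists>v\<in>V. \<not> co_connected u v"
    and S: "simplex V E VS" and sp: "spanned (multiplex_of E VS) = V"
    and s: "s \<in> VS" and t: "t \<in> VS" and "s \<noteq> t"
  shows "\<not> co_connected s t"
proof
  assume st: "co_connected s t"
  have "\<exists>w\<in>VS. \<not> co_connected s w"
  proof (rule ccontr)
    assume "\<not> (\<exists>w\<in>VS. \<not> co_connected s w)"
    then have co_s: "co_connected x s" if "x \<in> V" for x
      using spanning_multiplex_meets_co_components[OF sp that] co_connected_sym rtrancl_trans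
      by metis
    obtain u v where "u \<in> V" "v \<in> V" "\<not> co_connected u v"
      using co_disconnected by blast
    then show False
      using co_s co_connected_sym rtrancl_trans by metis
  qed
  then obtain w where w: "w \<in> VS" "\<not> co_connected s w" ..
  have "w \<noteq> s" "w \<noteq> t"
    using w(2) st by auto
  then have sw: "(s,w) \<in> E"
    using simplex_edge[OF S s w(1)] by blast
  have "same_color (s,w) (t,w)"
    using Gamma_trancl_slide_fst[OF st sw w(2)] by (rule Gamma_trancl_same_color)
  moreover have "{s,w} \<noteq> {t,w}"
    using \<open>s \<noteq> t\<close> \<open>w \<noteq> s\<close> by (auto simp: doubleton_eq_iff)
  ultimately show False
    using simplex_colors_distinct[OF S s w(1) t w(1)] by blast
qed

lemma spanning_multiplex_co_disconnected:
  assumes co_disconnected: "\<exists>u\<in>V. \<exists>v\<in>V. \<not> co_connected u v"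
    and S: "simplex V E VS" and sp: "spanned (multiplex_of E VS) = V"
  shows "multiplex_of E VS = E - co_edges\<^sup>*"
proof (intro set_eqI iffI)
  fix f assume "f \<in> multiplex_of E VS"
  then obtain s t x y where st: "s \<in> VS" "t \<in> VS" "(s,t) \<in> E" "same_color (s,t) (x,y)"
    and f: "f = (x,y)"
    using mem_multiplex_of_iff by (metis prod.collapse)
  have "s \<noteq> t"
    using st(3) edge_irrefl by blast
  then have not_st: "\<not> co_connected s t"
    using simplex_vertices_co_disconnected[OF co_disconnected S sp st(1,2)] by blast
  have "\<not> co_connected x y"
  proof
    assume "co_connected x y"
    then show False
      using same_color_co_connected[OF st(4)] not_st co_connected_sym rtrancl_trans by metis
  qed
  then show "f \<in> E - co_edges\<^sup>*"
    using same_color_edges[OF st(4)] f by simp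
next
  fix f assume "f \<in> E - co_edges\<^sup>*"
  then obtain u v where f: "f = (u,v)" and uv: "(u,v) \<in> E" "\<not> co_connected u v"
    by (cases f) auto
  obtain s where s: "s \<in> VS" "co_connected u s"
    using spanning_multiplex_meets_co_components[OF sp] edge_vertices[OF uv(1)] by blast
  obtain t where t: "t \<in> VS" "co_connected v t"
    using spanning_multiplex_meets_co_components[OF sp] edge_vertices[OF uv(1)] by blast
  have "s \<noteq> t"
    using s(2) t(2) uv(2) co_connected_sym rtrancl_trans by metis
  then have st: "(s,t) \<in> E"
    using simplex_edge[OF S s(1) t(1)] by blast
  have us: "((u,v),(s,v)) \<in> (Gamma E)\<^sup>+"
    using Gamma_trancl_slide_fst[OF s(2) uv] .
  moreover have "\<not> co_connected s v"
    using s(2) uv(2) rtrancl_trans by metis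
  then have "((s,v),(s,t)) \<in> (Gamma E)\<^sup>+"
    using Gamma_trancl_slide_snd[OF t(2)] Gamma_trancl_edges[OF us] by blast
  ultimately have "same_color (s,t) (u,v)"
    using Gamma_trancl_same_color Gamma_trancl_sym trancl_trans by metis
  then show "f \<in> multiplex_of E VS"
    using mem_multiplex_of_iff s(1) t(1) st f by blast
qed

lemma spanned_color_class_co_closed:
  assumes S: "simplex V E VS" and sp: "spanned (multiplex_of E VS) = V"
    and s1: "s1 \<in> VS" and s2: "s2 \<in> VS"
    and z: "z \<in> spanned (Collect (same_color (s1,s2)))" and zv: "(z,v) \<in> co_edges"
  shows "v \<in> spanned (Collect (same_color (s1,s2)))"
proof (rule ccontr)
  assume v: "v \<notin> spanned (Collect (same_color (s1,s2)))"
  obtain w0 where w0: "same_color (s1,s2) (z,w0)"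
    using z in_spanned_color_class_iff by blast
  then have s12: "(s1,s2) \<in> E"
    using same_color_edges by blast
  have "v \<in> V" and zv_non_edge: "(z,v) \<notin> E"
    using zv unfolding co_edges_def by auto
  then obtain si sj w where ij: "si \<in> VS" "sj \<in> VS" "same_color (si,sj) (v,w)"
    using in_spanned_multiplex_of sp by blast
  have swap_class: "Collect (same_color (s2,s1)) = Collect (same_color (s1,s2))"
    using same_color_swap_left by blast
  consider "s1 \<noteq> si" "s1 \<noteq> sj" | "s2 \<noteq> si" "s2 \<noteq> sj" | "(si,sj) = (s1,s2) \<or> (si,sj) = (s2,s1)"
    using s12 edge_irrefl by blast
  then show False
  proof cases
    case 1
    then have "(v,s1) \<in> E"
      using simplex_vertex_adjacent_to_color_class[OF S ij(1,2) s1 _ _ ij(3)] edge_sym by blast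
    then show False
      using adjacent_to_color_class[OF s12 v _ w0] zv_non_edge edge_sym by blast
  next
    case 2
    then have "(v,s2) \<in> E"
      using simplex_vertex_adjacent_to_color_class[OF S ij(1,2) s2 _ _ ij(3)] edge_sym by blast
    moreover have "same_color (s2,s1) (z,w0)"
      using w0 same_color_swap_left by blast
    ultimately show False
      using adjacent_to_color_class[OF edge_sym[OF s12]] v swap_class zv_non_edge edge_sym
      by metis
  next
    case 3
    then have "same_color (s1,s2) (v,w)"
      using ij(3) same_color_swap_left by blast
    then show False
      using v in_spanned_color_class_iff by blast
  qed
qed

lemma spanning_simplex_co_connected:
  assumes all_co_connected: "\<forall>u\<in>V. \<forall>v\<in>V. co_connected u v"
    and S: "simplex V E VS" and sp: "spanned (multiplex_of E VS) = V"
  shows "\<exists>s t. (s,t) \<in> E \<and> VS = {s,t}"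
proof -
  have "finite VS" "card VS \<ge> 2" "VS \<subseteq> V"
    using S unfolding simplex_def by auto
  then obtain s1 s2 where s12: "s1 \<in> VS" "s2 \<in> VS" "s1 \<noteq> s2"
    using card_le_Suc0_iff_eq[of VS] by auto
  have "VS \<subseteq> {s1,s2}"
  proof
    fix s0 assume s0: "s0 \<in> VS"
    let ?X = "spanned (Collect (same_color (s1,s2)))"
    have "co_connected s1 s0"
      using all_co_connected s0 s12(1) \<open>VS \<subseteq> V\<close> by blast
    moreover have "s1 \<in> ?X"
      using in_spanned_color_class_iff same_color_refl simplex_edge[OF S s12] by blast
    ultimately have "s0 \<in> ?X"
      by (induction rule: rtrancl_induct) (auto intro: spanned_color_class_co_closed[OF S sp s12(1,2)])
    then show "s0 \<in> {s1,s2}"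
      using simplex_vertex_adjacent_to_color_class[OF S s12(1,2) s0] edge_irrefl
        in_spanned_color_class_iff by blast
  qed
  then show ?thesis
    using s12 simplex_edge[OF S s12] by blast
qed

lemma spanning_color_classes_same_color:
  assumes ab: "(a,b) \<in> E"
    and sp1: "spanned (Collect (same_color (a,b))) = V" and sp2: "spanned (Collect (same_color e)) = V"
  shows "same_color (a,b) e"
proof (rule ccontr)
  assume ne: "\<not> same_color (a,b) e"
  have aV: "a \<in> V" and bV: "b \<in> V"
    using edge_vertices ab by auto
  obtain c where e_ac: "same_color e (a,c)"
    using sp2 aV in_spanned_color_class_iff by blast
  have ac: "(a,c) \<in> E"
    using same_color_edges e_ac by blast
  have e_ab: "\<not> same_color e (a,b)"
    using ne same_color_sym by blast
  have ac_ab: "\<not> same_color (a,b) (a,c)"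
    using ne e_ac same_color_sym same_color_trans by blast
  have bc: "(b,c) \<in> E"
  proof (rule ccontr)
    assume "(b,c) \<notin> E"
    then have "((b,a),(c,a)) \<in> Gamma E"
      unfolding Gamma_def using ab ac edge_sym by auto
    then show False
      using Gamma_same_color same_color_swap_left same_color_swap_right ac_ab by blast
  qed
  show False
  proof (cases "same_color (a,b) (b,c)")
    case False
    have "\<not> same_color (a,b) (c,a)" "\<not> same_color (a,b) (c,b)"
      using ac_ab False same_color_swap_right by blast+
    then have "c \<notin> V"
      using triangle_apex_not_spanned[OF edge_sym[OF ac] ab edge_sym[OF bc]] sp1 by blast
    then show False
      using edge_vertices ac by blast
  next
    case True
    have "\<not> same_color (a,c) (b,a)"
      using e_ab e_ac same_color_trans same_color_swap_right by blast
    moreover have "\<not> same_color (a,c) (b,c)"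
      using True ac_ab same_color_sym same_color_trans by blast
    ultimately have "b \<notin> spanned (Collect (same_color (a,c)))"
      using triangle_apex_not_spanned[OF edge_sym[OF ab] ac bc] by blast
    moreover have "Collect (same_color (a,c)) = Collect (same_color e)"
      using e_ac same_color_sym same_color_trans by blast
    ultimately show False
      using sp2 bV by simp
  qed
qed

lemma spanning_multiplexes_eq:
  assumes S1: "simplex V E VS1" and sp1: "spanned (multiplex_of E VS1) = V"
    and S2: "simplex V E VS2" and sp2: "spanned (multiplex_of E VS2) = V"
  shows "multiplex_of E VS1 = multiplex_of E VS2"
proof (cases "\<exists>u\<in>V. \<exists>v\<in>V. \<not> co_connected u v")
  case True
  then show ?thesis
    using spanning_multiplex_co_disconnected[OF True S1 sp1]
      spanning_multiplex_co_disconnected[OF True S2 sp2] by simp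
next
  case False
  then have all_co_connected: "\<forall>u\<in>V. \<forall>v\<in>V. co_connected u v"
    by blast
  obtain s t s' t' where st: "(s,t) \<in> E" "VS1 = {s,t}" and st': "(s',t') \<in> E" "VS2 = {s',t'}"
    using spanning_simplex_co_connected[OF all_co_connected S1 sp1]
      spanning_simplex_co_connected[OF all_co_connected S2 sp2] by blast
  then have M1: "multiplex_of E VS1 = Collect (same_color (s,t))"
    and M2: "multiplex_of E VS2 = Collect (same_color (s',t'))"
    using multiplex_of_edge by simp_all
  have "same_color (s,t) (s',t')"
    using spanning_color_classes_same_color[OF st(1)] sp1 sp2 unfolding M1 M2 by blast
  then show ?thesis
    unfolding M1 M2 using same_color_sym same_color_trans by blast
qed

end

theorem corollary4p6:
  assumes "undirected_graph V E"
    and "is_multiplex V E M1" and "spanned M1 = V"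
    and "is_multiplex V E M2" and "spanned M2 = V"
  shows "M1 = M2"
proof -
  interpret ugraph V E
    using assms(1) by unfold_locales
  obtain VS1 VS2 where "simplex V E VS1" "M1 = multiplex_of E VS1"
    and "simplex V E VS2" "M2 = multiplex_of E VS2"
    using assms(2,4) unfolding is_multiplex_def by blast
  then show ?thesis
    using spanning_multiplexes_eq assms(3,5) by simp
qed

end
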